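(* In a search game (as defined in the context), for a mixed outcome $f:\Omega\to[0,1]$ the following are equivalent: (i) $f$ can be induced by a lottery over pure strategy profiles; (ii) $f$ is compatible; (iii) $f$ can be generated by a fractional allocation, i.e., $f=f_\alpha$ for some fractional allocation $\alpha$.
   Context: A search game has a finite set of players $N=\{1,\ldots,n\}$, a finite set $\Omega$ of locations, for each player $i$ a partition $\Pi_i$ of $\Omega$ (with $\pi_i(\omega)$ the cell containing $\omega$) and a capacity $K_i\in\mathbb{N}$ (other ingredients such as prior, costs and rewards are irrelevant here). A pure strategy $s_i$ assigns to each cell $\pi_i\in\Pi_i$ a subset $s_i(\pi_i)\subseteq\pi_i$ with at most $K_i$ elements; a pure profile is $s=(s_1,\ldots,s_n)$, and $m_s(\omega)=\sum_{i\in N}\mathbf{1}_{\omega\in s_i(\pi_i(\omega))}$. A mixed outcome is a function $f:\Omega\to[0,1]$. A lottery over pure profiles (a probability distribution $\sigma$ over the finite set of pure profiles) induces the mixed outcome $f(\omega)=\sigma(\{s: m_s(\omega)\ge1\})$. A mixed outcome $f$ is compatible if for every $W\subseteq\Omega$: $\sum_{\omega\in W}f(\omega)\le\sum_{i\in N}K_i\cdot|\{\pi_i\in\Pi_i:\pi_i\cap W\ne\emptyset\}|$. A fractional allocation $\alpha=(\alpha_1,\ldots,\alpha_n)$ specifies a number $\alpha_i(\pi_i,\omega)\ge0$ for every player $i$, cell $\pi_i\in\Pi_i$ and $\omega\in\pi_i$, such that $\sum_{\omega\in\pi_i}\alpha_i(\pi_i,\omega)\le K_i$ for every cell $\pi_i$;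 it generates the mixed outcome $f_\alpha(\omega)=\min\big(1,\sum_{i\in N}\alpha_i(\pi_i(\omega),\omega)\big)$. *)

theory Defs
  imports "HOL-Probability.Probability_Mass_Function" "HOL-Library.Disjoint_Sets"
begin

text \<open>Players have type 'i (player set N), locations have type 'w (location set \<Omega>).
  P i is the partition of player i, K i its capacity.\<close>

definition cell :: "('i \<Rightarrow> 'w set set) \<Rightarrow> 'i \<Rightarrow> 'w \<Rightarrow> 'w set" where
  "cell P i \<omega> = (THE c. c \<in> P i \<and> \<omega> \<in> c)"

text \<open>A pure strategy of player i: a subset of size at most K i of each cell
  (and, for canonicity, the empty set on non-cells).\<close>
definition pure_strategy :: "('i \<Rightarrow> 'w set set) \<Rightarrow> ('i \<Rightarrow> nat) \<Rightarrow> 'i \<Rightarrow> ('w set \<Rightarrow> 'w set) \<Rightarrow> bool" where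
  "pure_strategy P K i t \<longleftrightarrow>
     (\<forall>c\<in>P i. t c \<subseteq> c \<and> card (t c) \<le> K i) \<and> (\<forall>c. c \<notin> P i \<longrightarrow> t c = {})"

definition pure_profile :: "'i set \<Rightarrow> ('i \<Rightarrow> 'w set set) \<Rightarrow> ('i \<Rightarrow> nat) \<Rightarrow> ('i \<Rightarrow> 'w set \<Rightarrow> 'w set) \<Rightarrow> bool" where
  "pure_profile N P K s \<longleftrightarrow>
     (\<forall>i\<in>N. pure_strategy P K i (s i)) \<and> (\<forall>i. i \<notin> N \<longrightarrow> s i = (\<lambda>_. {}))"

definition searchers :: "'i set \<Rightarrow> ('i \<Rightarrow> 'w set set) \<Rightarrow> ('i \<Rightarrow> 'w set \<Rightarrow> 'w set) \<Rightarrow> 'w \<Rightarrow> nat" where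
  "searchers N P s \<omega> = (\<Sum>i\<in>N. if \<omega> \<in> s i (cell P i \<omega>) then 1 else 0)"

definition induced_by_lottery :: "'i set \<Rightarrow> 'w set \<Rightarrow> ('i \<Rightarrow> 'w set set) \<Rightarrow> ('i \<Rightarrow> nat) \<Rightarrow> ('w \<Rightarrow> real) \<Rightarrow> bool" where
  "induced_by_lottery N \<Omega> P K f \<longleftrightarrow>
     (\<exists>\<sigma> :: ('i \<Rightarrow> 'w set \<Rightarrow> 'w set) pmf.
        set_pmf \<sigma> \<subseteq> {s. pure_profile N P K s} \<and>
        (\<forall>\<omega>\<in>\<Omega>. f \<omega> = measure_pmf.prob \<sigma> {s. searchers N P s \<omega> \<ge> 1}))"

definition compatible :: "'i set \<Rightarrow> 'w set \<Rightarrow> ('i \<Rightarrow> 'w set set) \<Rightarrow> ('i \<Rightarrow> nat) \<Rightarrow> ('w \<Rightarrow> real) \<Rightarrow> bool" where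
  "compatible N \<Omega> P K f \<longleftrightarrow>
     (\<forall>W\<subseteq>\<Omega>. (\<Sum>\<omega>\<in>W. f \<omega>) \<le> (\<Sum>i\<in>N. real (K i) * real (card {c\<in>P i. c \<inter> W \<noteq> {}})))"

definition fractional_allocation :: "'i set \<Rightarrow> ('i \<Rightarrow> 'w set set) \<Rightarrow> ('i \<Rightarrow> nat) \<Rightarrow> ('i \<Rightarrow> 'w set \<Rightarrow> 'w \<Rightarrow> real) \<Rightarrow> bool" where
  "fractional_allocation N P K \<alpha> \<longleftrightarrow>
     (\<forall>i\<in>N. \<forall>c\<in>P i. (\<forall>\<omega>\<in>c. \<alpha> i c \<omega> \<ge> 0) \<and> (\<Sum>\<omega>\<in>c. \<alpha> i c \<omega>) \<le> real (K i))"

definition generated_outcome :: "'i set \<Rightarrow> ('i \<Rightarrow> 'w set set) \<Rightarrow> ('i \<Rightarrow> 'w set \<Rightarrow> 'w \<Rightarrow> real) \<Rightarrow> 'w \<Rightarrow> real" where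
  "generated_outcome N P \<alpha> \<omega> = min 1 (\<Sum>i\<in>N. \<alpha> i (cell P i \<omega>) \<omega>)"

end

theory Submission
  imports Defs
begin

(* The substance is (ii) implies (i). Let every pair (i, c) of a player and one of its cells be an
   agent that may search at most K i locations of c; compatibility is then a Hall-type condition:
   the total value of f on W is at most the capacity of the agents that can reach W. Such an f is
   the coverage probability of a random selection of the agents, by induction on the locations and,
   for fixed locations, on the number of fractional values plus slack sets. A zero or a nontrivial
   tight set splits the instance; if f is identically 1, integrality of the capacities lets one
   location be given to an agent; otherwise f can be moved in two opposite directions until a new
   constraint becomes tight, and f is a mixture of the two end points.
   For (i) implies (iii), each searcher of a location gets an equal share of the credit for it and
   the allocation is the expected credit; (iii) implies (ii) by counting the cells that meet W. *)

section \<open>Random selections of agents\<close>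

definition capacity :: "'a set \<Rightarrow> ('a \<Rightarrow> 'w set) \<Rightarrow> ('a \<Rightarrow> nat) \<Rightarrow> 'w set \<Rightarrow> nat" where
  "capacity A D \<kappa> W = (\<Sum>a\<in>A. if D a \<inter> W = {} then 0 else \<kappa> a)"

definition cap_compatible :: "'a set \<Rightarrow> 'w set \<Rightarrow> ('a \<Rightarrow> 'w set) \<Rightarrow> ('a \<Rightarrow> nat) \<Rightarrow> ('w \<Rightarrow> real) \<Rightarrow> bool" where
  "cap_compatible A \<Omega> D \<kappa> f \<longleftrightarrow> (\<forall>W\<subseteq>\<Omega>. sum f W \<le> capacity A D \<kappa> W)"

definition selection :: "'a set \<Rightarrow> ('a \<Rightarrow> 'w set) \<Rightarrow> ('a \<Rightarrow> nat) \<Rightarrow> ('a \<Rightarrow> 'w set) \<Rightarrow> bool" where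
  "selection A D \<kappa> x \<longleftrightarrow> (\<forall>a\<in>A. x a \<subseteq> D a \<and> card (x a) \<le> \<kappa> a)"

definition realizable :: "'a set \<Rightarrow> 'w set \<Rightarrow> ('a \<Rightarrow> 'w set) \<Rightarrow> ('a \<Rightarrow> nat) \<Rightarrow> ('w \<Rightarrow> real) \<Rightarrow> bool" where
  "realizable A \<Omega> D \<kappa> f \<longleftrightarrow> (\<exists>\<tau>. (\<forall>x\<in>set_pmf \<tau>. selection A D \<kappa> x) \<and>
     (\<forall>\<omega>\<in>\<Omega>. f \<omega> = measure_pmf.prob \<tau> {x. \<exists>a\<in>A. \<omega> \<in> x a}))"

lemma realizable_zero:
  assumes "\<forall>\<omega>\<in>\<Omega>. f \<omega> = 0"
  shows "realizable A \<Omega> D \<kappa> f"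
  unfolding realizable_def
  by (rule exI[of _ "return_pmf (\<lambda>_. {})"]) (simp add: selection_def assms)

lemma measure_pmf_cong_support:
  assumes "\<And>x. x \<in> set_pmf p \<Longrightarrow> x \<in> X \<longleftrightarrow> x \<in> Y"
  shows "measure_pmf.prob p X = measure_pmf.prob p Y"
  by (rule measure_prob_cong_0) (use assms in \<open>auto simp: set_pmf_iff\<close>)

lemma measure_pair_pmf_fst_cong:
  assumes "\<And>x y. x \<in> set_pmf p \<Longrightarrow> y \<in> set_pmf q \<Longrightarrow> (x, y) \<in> E \<longleftrightarrow> x \<in> X"
  shows "measure_pmf.prob (pair_pmf p q) E = measure_pmf.prob p X"
proof -
  have "measure_pmf.prob (pair_pmf p q) E = measure_pmf.prob (pair_pmf p q) (fst -` X)"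
    using assms by (intro measure_pmf_cong_support) (auto simp: set_pair_pmf)
  also have "\<dots> = measure_pmf.prob p X"
    by (metis measure_map_pmf map_fst_pair_pmf)
  finally show ?thesis .
qed

lemma measure_pair_pmf_snd_cong:
  assumes "\<And>x y. x \<in> set_pmf p \<Longrightarrow> y \<in> set_pmf q \<Longrightarrow> (x, y) \<in> E \<longleftrightarrow> y \<in> Y"
  shows "measure_pmf.prob (pair_pmf p q) E = measure_pmf.prob q Y"
proof -
  have "measure_pmf.prob (pair_pmf p q) E = measure_pmf.prob (pair_pmf p q) (snd -` Y)"
    using assms by (intro measure_pmf_cong_support) (auto simp: set_pair_pmf)
  also have "\<dots> = measure_pmf.prob q Y"
    by (metis measure_map_pmf map_snd_pair_pmf)
  finally show ?thesis .
qed

lemma selection_join: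
  assumes "selection A (\<lambda>a. D a \<inter> W) \<kappa> x"
    and "selection A (\<lambda>a. if D a \<inter> W = {} then D a else {}) \<kappa> y"
  shows "selection A D \<kappa> (\<lambda>a. x a \<union> y a)"
  unfolding selection_def
proof
  fix a assume "a \<in> A"
  with assms have "x a \<subseteq> D a \<inter> W" "card (x a) \<le> \<kappa> a"
    and "y a \<subseteq> (if D a \<inter> W = {} then D a else {})" "card (y a) \<le> \<kappa> a"
    unfolding selection_def by blast+
  then show "x a \<union> y a \<subseteq> D a \<and> card (x a \<union> y a) \<le> \<kappa> a"
    by (cases "D a \<inter> W = {}") auto
qed

lemma realizable_split:
  assumes "realizable A W (\<lambda>a. D a \<inter> W) \<kappa> f"
    and "realizable A (\<Omega> - W) (\<lambda>a. if D a \<inter> W = {} then D a else {}) \<kappa> f"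
  shows "realizable A \<Omega> D \<kappa> f"
proof -
  obtain \<tau>1 where sel1: "\<forall>x\<in>set_pmf \<tau>1. selection A (\<lambda>a. D a \<inter> W) \<kappa> x"
    and marg1: "\<forall>\<omega>\<in>W. f \<omega> = measure_pmf.prob \<tau>1 {x. \<exists>a\<in>A. \<omega> \<in> x a}"
    using assms(1) unfolding realizable_def by blast
  obtain \<tau>2 where sel2: "\<forall>y\<in>set_pmf \<tau>2. selection A (\<lambda>a. if D a \<inter> W = {} then D a else {}) \<kappa> y"
    and marg2: "\<forall>\<omega>\<in>\<Omega> - W. f \<omega> = measure_pmf.prob \<tau>2 {y. \<exists>a\<in>A. \<omega> \<in> y a}"
    using assms(2) unfolding realizable_def by blast
  let ?\<tau> = "pair_pmf \<tau>1 \<tau>2"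
  let ?join = "\<lambda>(x, y) a. x a \<union> y a"
  have inside: "x a \<subseteq> W" if "x \<in> set_pmf \<tau>1" "a \<in> A" for x a
    using sel1 that unfolding selection_def by blast
  have outside: "y a \<inter> W = {}" if "y \<in> set_pmf \<tau>2" "a \<in> A" for y a
  proof -
    have "y a \<subseteq> (if D a \<inter> W = {} then D a else {})"
      using sel2 that unfolding selection_def by blast
    then show ?thesis by (cases "D a \<inter> W = {}") auto
  qed
  have "selection A D \<kappa> (?join z)" if "z \<in> set_pmf ?\<tau>" for z
    using that sel1 sel2 by (cases z) (auto simp: set_pair_pmf intro!: selection_join[of A D W \<kappa>])
  moreover have "f \<omega> = measure_pmf.prob (map_pmf ?join ?\<tau>) {x. \<exists>a\<in>A. \<omega> \<in> x a}"
    if "\<omega> \<in> \<Omega>" for \<omega>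
  proof (cases "\<omega> \<in> W")
    case True
    have "measure_pmf.prob ?\<tau> (?join -` {x. \<exists>a\<in>A. \<omega> \<in> x a})
        = measure_pmf.prob \<tau>1 {x. \<exists>a\<in>A. \<omega> \<in> x a}"
      using outside True by (intro measure_pair_pmf_fst_cong) auto
    then show ?thesis using marg1 True by simp
  next
    case False
    have "measure_pmf.prob ?\<tau> (?join -` {x. \<exists>a\<in>A. \<omega> \<in> x a})
        = measure_pmf.prob \<tau>2 {x. \<exists>a\<in>A. \<omega> \<in> x a}"
      using inside False by (intro measure_pair_pmf_snd_cong) auto
    then show ?thesis using marg2 False that by simp
  qed
  ultimately show ?thesis
    unfolding realizable_def by (intro exI[of _ "map_pmf ?join ?\<tau>"]) auto
qed

lemma realizable_assign:
  assumes "a0 \<in> A" "\<omega> \<in> D a0" "1 \<le> \<kappa> a0" "f \<omega> = 1"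
    and "realizable A (\<Omega> - {\<omega>}) (\<lambda>a. D a - {\<omega>}) (\<kappa>(a0 := \<kappa> a0 - 1)) f"
  shows "realizable A \<Omega> D \<kappa> f"
proof -
  obtain \<tau> where sel: "\<forall>x\<in>set_pmf \<tau>. selection A (\<lambda>a. D a - {\<omega>}) (\<kappa>(a0 := \<kappa> a0 - 1)) x"
    and marg: "\<forall>\<omega>'\<in>\<Omega> - {\<omega>}. f \<omega>' = measure_pmf.prob \<tau> {x. \<exists>a\<in>A. \<omega>' \<in> x a}"
    using assms(5) unfolding realizable_def by blast
  let ?add = "\<lambda>x. x(a0 := insert \<omega> (x a0))"
  have "selection A D \<kappa> (?add x)" if "x \<in> set_pmf \<tau>" for x
    unfolding selection_def
  proof
    fix a assume "a \<in> A"
    with sel that have "x a \<subseteq> D a - {\<omega>}" "card (x a) \<le> (\<kappa>(a0 := \<kappa> a0 - 1)) a"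
      unfolding selection_def by blast+
    then show "?add x a \<subseteq> D a \<and> card (?add x a) \<le> \<kappa> a"
      using assms(2,3) by (cases "a = a0") (auto intro: card_insert_le_m1)
  qed
  moreover have "f \<omega>' = measure_pmf.prob (map_pmf ?add \<tau>) {x. \<exists>a\<in>A. \<omega>' \<in> x a}"
    if "\<omega>' \<in> \<Omega>" for \<omega>'
  proof (cases "\<omega>' = \<omega>")
    case True
    have "?add -` {x. \<exists>a\<in>A. \<omega> \<in> x a} = UNIV" using assms(1) by force
    then show ?thesis using assms(4) True by simp
  next
    case False
    then have "?add -` {x. \<exists>a\<in>A. \<omega>' \<in> x a} = {x. \<exists>a\<in>A. \<omega>' \<in> x a}" by auto
    then show ?thesis using marg that False by simp
  qed
  ultimately show ?thesis
    unfolding realizable_def by (intro exI[of _ "map_pmf ?add \<tau>"]) auto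
qed

lemma measure_bind_bernoulli_pmf:
  assumes "0 \<le> l" "l \<le> 1"
  shows "measure_pmf.prob (bind_pmf (bernoulli_pmf l) (\<lambda>b. if b then p else q)) X
     = l * measure_pmf.prob p X + (1 - l) * measure_pmf.prob q X"
proof -
  have "ennreal (measure_pmf.prob (bind_pmf (bernoulli_pmf l) (\<lambda>b. if b then p else q)) X)
      = ennreal (l * measure_pmf.prob p X) + ennreal ((1 - l) * measure_pmf.prob q X)"
    using assms by (simp add: measure_pmf.emeasure_eq_measure[symmetric] ennreal_mult' mult.commute)
  then show ?thesis
    using assms by (simp add: ennreal_plus[symmetric] del: ennreal_plus)
qed

lemma realizable_convex:
  assumes "realizable A \<Omega> D \<kappa> f" "realizable A \<Omega> D \<kappa> g" "0 \<le> l" "l \<le> 1"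
  shows "realizable A \<Omega> D \<kappa> (\<lambda>\<omega>. l * f \<omega> + (1 - l) * g \<omega>)"
proof -
  obtain \<tau>1 where "\<forall>x\<in>set_pmf \<tau>1. selection A D \<kappa> x"
    and "\<forall>\<omega>\<in>\<Omega>. f \<omega> = measure_pmf.prob \<tau>1 {x. \<exists>a\<in>A. \<omega> \<in> x a}"
    using assms(1) unfolding realizable_def by blast
  moreover obtain \<tau>2 where "\<forall>x\<in>set_pmf \<tau>2. selection A D \<kappa> x"
    and "\<forall>\<omega>\<in>\<Omega>. g \<omega> = measure_pmf.prob \<tau>2 {x. \<exists>a\<in>A. \<omega> \<in> x a}"
    using assms(2) unfolding realizable_def by blast
  ultimately show ?thesis
    unfolding realizable_def using assms(3,4)
    by (intro exI[of _ "bind_pmf (bernoulli_pmf l) (\<lambda>b. if b then \<tau>1 else \<tau>2)"])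
       (auto simp: measure_bind_bernoulli_pmf set_bind_pmf split: if_splits)
qed

lemma capacity_cong:
  assumes "\<And>a. a \<in> A \<Longrightarrow> D a \<inter> W = D' a \<inter> W"
  shows "capacity A D \<kappa> W = capacity A D' \<kappa> W"
  unfolding capacity_def using assms by (intro sum.cong) auto

lemma capacity_union:
  "capacity A D \<kappa> (W \<union> W') = capacity A D \<kappa> W + capacity A (\<lambda>a. if D a \<inter> W = {} then D a else {}) \<kappa> W'"
  unfolding capacity_def sum.distrib[symmetric] by (rule sum.cong) auto

lemma capacity_decrement:
  assumes "finite A" "a0 \<in> A"
  shows "capacity A D \<kappa> W \<le> capacity A D (\<kappa>(a0 := \<kappa> a0 - 1)) W + 1"
proof -
  let ?c = "\<lambda>\<kappa> a. if D a \<inter> W = {} then 0 else \<kappa> a"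
  have "(\<Sum>a\<in>A - {a0}. ?c (\<kappa>(a0 := \<kappa> a0 - 1)) a) = (\<Sum>a\<in>A - {a0}. ?c \<kappa> a)"
    by (rule sum.cong) auto
  moreover have "capacity A D \<kappa> W = ?c \<kappa> a0 + (\<Sum>a\<in>A - {a0}. ?c \<kappa> a)"
    and "capacity A D (\<kappa>(a0 := \<kappa> a0 - 1)) W
      = ?c (\<kappa>(a0 := \<kappa> a0 - 1)) a0 + (\<Sum>a\<in>A - {a0}. ?c (\<kappa>(a0 := \<kappa> a0 - 1)) a)"
    unfolding capacity_def using assms by (simp_all add: sum.remove)
  ultimately show ?thesis by auto
qed

lemma cap_compatible_obtain_agent:
  assumes "cap_compatible A \<Omega> D \<kappa> f" "\<omega> \<in> \<Omega>" "f \<omega> = 1"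
  obtains a where "a \<in> A" "\<omega> \<in> D a" "1 \<le> \<kappa> a"
proof (rule ccontr)
  assume "\<not> thesis"
  then have "capacity A D \<kappa> {\<omega>} = 0"
    unfolding capacity_def by (intro sum.neutral) (use that in \<open>force simp: Suc_le_eq\<close>)
  moreover have "sum f {\<omega>} \<le> capacity A D \<kappa> {\<omega>}"
    using assms(1,2) unfolding cap_compatible_def by blast
  ultimately show False using assms(3) by simp
qed

lemma cap_compatible_restrict:
  assumes "cap_compatible A \<Omega> D \<kappa> f" "W \<subseteq> \<Omega>"
  shows "cap_compatible A W (\<lambda>a. D a \<inter> W) \<kappa> f"
  unfolding cap_compatible_def
proof (intro allI impI)
  fix W' assume "W' \<subseteq> W"
  then have "capacity A (\<lambda>a. D a \<inter> W) \<kappa> W' = capacity A D \<kappa> W'"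
    by (intro capacity_cong) auto
  then show "sum f W' \<le> capacity A (\<lambda>a. D a \<inter> W) \<kappa> W'"
    using assms \<open>W' \<subseteq> W\<close> unfolding cap_compatible_def by auto
qed

text \<open>The agents that reach a tight set \<open>W\<close> are used up inside \<open>W\<close>; the complement keeps only
  the agents that miss \<open>W\<close>.\<close>
lemma cap_compatible_outside_tight:
  assumes "finite \<Omega>" "cap_compatible A \<Omega> D \<kappa> f" "W \<subseteq> \<Omega>" "sum f W = capacity A D \<kappa> W"
  shows "cap_compatible A (\<Omega> - W) (\<lambda>a. if D a \<inter> W = {} then D a else {}) \<kappa> f"
  unfolding cap_compatible_def
proof (intro allI impI)
  fix W' assume W': "W' \<subseteq> \<Omega> - W"
  have "sum f W + sum f W' = sum f (W \<union> W')"
    using assms(1,3) W' by (intro sum.union_disjoint[symmetric]) (auto intro: finite_subset)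
  also have "\<dots> \<le> capacity A D \<kappa> (W \<union> W')"
    using assms(2) unfolding cap_compatible_def by (meson W' assms(3) Diff_subset le_sup_iff order_trans)
  finally show "sum f W' \<le> capacity A (\<lambda>a. if D a \<inter> W = {} then D a else {}) \<kappa> W'"
    using assms(4) by (simp add: capacity_union)
qed

lemma cap_compatible_assign:
  assumes "finite A" "a0 \<in> A" "\<omega> \<in> \<Omega>" "\<forall>\<omega>\<in>\<Omega>. f \<omega> = 1" "cap_compatible A \<Omega> D \<kappa> f"
    and "\<forall>W\<subseteq>\<Omega>. sum f W = capacity A D \<kappa> W \<longrightarrow> W = {} \<or> W = \<Omega>"
  shows "cap_compatible A (\<Omega> - {\<omega>}) (\<lambda>a. D a - {\<omega>}) (\<kappa>(a0 := \<kappa> a0 - 1)) f"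
  unfolding cap_compatible_def
proof (intro allI impI)
  fix W assume W: "W \<subseteq> \<Omega> - {\<omega>}"
  show "sum f W \<le> capacity A (\<lambda>a. D a - {\<omega>}) (\<kappa>(a0 := \<kappa> a0 - 1)) W"
  proof (cases "W = {}")
    case False
    have "sum f W = sum (\<lambda>_. 1) W" using assms(4) W by (intro sum.cong) auto
    then have "sum f W = card W" by simp
    moreover have "sum f W \<le> capacity A D \<kappa> W" "sum f W \<noteq> capacity A D \<kappa> W"
      using assms(3,5,6) W False unfolding cap_compatible_def by auto
    \<comment> \<open>integrality: a nonempty proper subset has slack at least one\<close>
    ultimately have "card W + 1 \<le> capacity A D \<kappa> W" by linarith
    also have "\<dots> \<le> capacity A D (\<kappa>(a0 := \<kappa> a0 - 1)) W + 1"
      using assms(1,2) by (rule capacity_decrement)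
    also have "capacity A D (\<kappa>(a0 := \<kappa> a0 - 1)) W = capacity A (\<lambda>a. D a - {\<omega>}) (\<kappa>(a0 := \<kappa> a0 - 1)) W"
      using W by (intro capacity_cong) auto
    finally show ?thesis using \<open>sum f W = card W\<close> by simp
  qed simp
qed

section \<open>Moving a compatible outcome\<close>

definition fractional_points :: "'w set \<Rightarrow> ('w \<Rightarrow> real) \<Rightarrow> 'w set" where
  "fractional_points \<Omega> f = {\<omega>\<in>\<Omega>. 0 < f \<omega> \<and> f \<omega> < 1}"

definition slack_sets :: "'a set \<Rightarrow> 'w set \<Rightarrow> ('a \<Rightarrow> 'w set) \<Rightarrow> ('a \<Rightarrow> nat) \<Rightarrow> ('w \<Rightarrow> real) \<Rightarrow> 'w set set" where
  "slack_sets A \<Omega> D \<kappa> f = {W. W \<subseteq> \<Omega> \<and> sum f W < capacity A D \<kappa> W}"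

definition freedom :: "'a set \<Rightarrow> 'w set \<Rightarrow> ('a \<Rightarrow> 'w set) \<Rightarrow> ('a \<Rightarrow> nat) \<Rightarrow> ('w \<Rightarrow> real) \<Rightarrow> nat" where
  "freedom A \<Omega> D \<kappa> f = card (fractional_points \<Omega> f) + card (slack_sets A \<Omega> D \<kappa> f)"

definition admissible_direction ::
    "'a set \<Rightarrow> 'w set \<Rightarrow> ('a \<Rightarrow> 'w set) \<Rightarrow> ('a \<Rightarrow> nat) \<Rightarrow> ('w \<Rightarrow> real) \<Rightarrow> ('w \<Rightarrow> real) \<Rightarrow> bool" where
  "admissible_direction A \<Omega> D \<kappa> f d \<longleftrightarrow> (\<exists>\<omega>\<in>\<Omega>. d \<omega> \<noteq> 0)
     \<and> (\<forall>\<omega>\<in>\<Omega>. d \<omega> \<noteq> 0 \<longrightarrow> \<omega> \<in> fractional_points \<Omega> f)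
     \<and> (\<forall>W\<subseteq>\<Omega>. sum f W = capacity A D \<kappa> W \<longrightarrow> sum d W = 0)"

lemma admissible_direction_uminus:
  "admissible_direction A \<Omega> D \<kappa> f d \<Longrightarrow> admissible_direction A \<Omega> D \<kappa> f (\<lambda>\<omega>. - d \<omega>)"
  unfolding admissible_direction_def by (simp add: sum_negf)

lemma fractional_points_not_singleton:
  assumes "finite \<Omega>" "\<forall>\<omega>\<in>\<Omega>. f \<omega> \<in> {0..1}" "sum f \<Omega> = real n" "\<omega>0 \<in> fractional_points \<Omega> f"
  shows "\<exists>\<omega>1\<in>fractional_points \<Omega> f. \<omega>1 \<noteq> \<omega>0"
proof (rule ccontr)
  assume none: "\<not> ?thesis"
  have "f \<omega> \<in> \<int>" if "\<omega> \<in> \<Omega> - {\<omega>0}" for \<omega>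
  proof -
    have "\<not> (0 < f \<omega> \<and> f \<omega> < 1)" using none that unfolding fractional_points_def by auto
    then have "f \<omega> = 0 \<or> f \<omega> = 1" using assms(2) that by force
    then show ?thesis by auto
  qed
  then have "sum f (\<Omega> - {\<omega>0}) \<in> \<int>" by (rule Ints_sum)
  moreover have "\<omega>0 \<in> \<Omega>" using assms(4) unfolding fractional_points_def by simp
  then have "f \<omega>0 = real n - sum f (\<Omega> - {\<omega>0})"
    using sum.remove[OF assms(1), of \<omega>0 f] assms(3) by simp
  ultimately have "f \<omega>0 \<in> \<int>" by simp
  moreover have "0 < f \<omega>0" "f \<omega>0 < 1" using assms(4) unfolding fractional_points_def by auto
  ultimately show False using Ints_nonzero_abs_less1[of "f \<omega>0"] by simp
qed

lemma linear_constraints_max_step: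
  fixes C :: "('a::linordered_field \<times> 'a \<times> 'a) set"
  assumes "finite C" "\<forall>(u, v, b)\<in>C. u \<le> b \<and> (0 < v \<longrightarrow> u < b)" "\<exists>(u, v, b)\<in>C. 0 < v"
  obtains t where "0 < t" "\<forall>(u, v, b)\<in>C. u + t * v \<le> b" "\<exists>(u, v, b)\<in>C. 0 < v \<and> u + t * v = b"
proof -
  let ?R = "(\<lambda>(u, v, b). (b - u) / v) ` {(u, v, b)\<in>C. 0 < v}"
  have "finite {(u, v, b)\<in>C. 0 < v}" using assms(1) by (rule rev_finite_subset) auto
  then have "finite ?R" "?R \<noteq> {}" using assms(3) by auto
  then have t: "Min ?R \<in> ?R" "\<forall>r\<in>?R. Min ?R \<le> r" by simp_all
  show thesis
  proof (rule that)
    show "0 < Min ?R" using t(1) assms(2) by auto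
    show "\<forall>(u, v, b)\<in>C. u + Min ?R * v \<le> b"
    proof (intro ballI, clarify)
      fix u v b assume c: "(u, v, b) \<in> C"
      show "u + Min ?R * v \<le> b"
      proof (cases "0 < v")
        case True
        then have "Min ?R \<le> (b - u) / v" using t(2) c by force
        then show ?thesis using True by (simp add: le_divide_eq algebra_simps)
      next
        case False
        then have "Min ?R * v \<le> 0" using \<open>0 < Min ?R\<close> by (simp add: mult_nonneg_nonpos)
        then show ?thesis using assms(2) c by auto
      qed
    qed
    obtain u v b where "(u, v, b) \<in> C" "0 < v" "Min ?R = (b - u) / v" using t(1) by auto
    then show "\<exists>(u, v, b)\<in>C. 0 < v \<and> u + Min ?R * v = b" by (intro bexI[of _ "(u, v, b)"]) auto
  qed
qed

lemma fractional_points_perturb: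
  assumes "\<forall>\<omega>\<in>\<Omega>. d \<omega> \<noteq> 0 \<longrightarrow> \<omega> \<in> fractional_points \<Omega> f"
  shows "fractional_points \<Omega> (\<lambda>\<omega>. f \<omega> + t * d \<omega>) \<subseteq> fractional_points \<Omega> f"
  using assms unfolding fractional_points_def by force

lemma sum_perturb:
  fixes f d :: "'w \<Rightarrow> real"
  shows "(\<Sum>\<omega>\<in>W. f \<omega> + t * d \<omega>) = sum f W + t * sum d W"
  by (simp add: sum.distrib flip: sum_distrib_left)

lemma in_slack_setsI:
  assumes "cap_compatible A \<Omega> D \<kappa> f" "W \<subseteq> \<Omega>" "sum f W \<noteq> capacity A D \<kappa> W"
  shows "W \<in> slack_sets A \<Omega> D \<kappa> f"
proof -
  have "sum f W \<le> capacity A D \<kappa> W" using assms(1,2) unfolding cap_compatible_def by blast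
  with assms(2,3) show ?thesis unfolding slack_sets_def by simp
qed

lemma slack_sets_perturb:
  assumes "cap_compatible A \<Omega> D \<kappa> f" "\<forall>W\<subseteq>\<Omega>. sum f W = capacity A D \<kappa> W \<longrightarrow> sum d W = 0"
  shows "slack_sets A \<Omega> D \<kappa> (\<lambda>\<omega>. f \<omega> + t * d \<omega>) \<subseteq> slack_sets A \<Omega> D \<kappa> f"
proof
  fix W assume "W \<in> slack_sets A \<Omega> D \<kappa> (\<lambda>\<omega>. f \<omega> + t * d \<omega>)"
  then have "W \<subseteq> \<Omega>" "sum f W + t * sum d W < capacity A D \<kappa> W"
    unfolding slack_sets_def sum_perturb by auto
  with assms(2) have "sum f W \<noteq> capacity A D \<kappa> W" by force
  with assms(1) \<open>W \<subseteq> \<Omega>\<close> show "W \<in> slack_sets A \<Omega> D \<kappa> f" by (rule in_slack_setsI)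
qed

lemma freedom_decreases:
  assumes "finite \<Omega>"
    and "fractional_points \<Omega> g \<subseteq> fractional_points \<Omega> f" "slack_sets A \<Omega> D \<kappa> g \<subseteq> slack_sets A \<Omega> D \<kappa> f"
    and "fractional_points \<Omega> g \<noteq> fractional_points \<Omega> f \<or> slack_sets A \<Omega> D \<kappa> g \<noteq> slack_sets A \<Omega> D \<kappa> f"
  shows "freedom A \<Omega> D \<kappa> g < freedom A \<Omega> D \<kappa> f"
proof -
  have "finite (fractional_points \<Omega> f)" "finite (slack_sets A \<Omega> D \<kappa> f)"
    using assms(1) unfolding fractional_points_def slack_sets_def by auto
  with assms(2-4) show ?thesis
    unfolding freedom_def by (metis add_le_less_mono add_less_le_mono card_mono psubset_card_mono psubsetI)
qed

lemma max_perturbation: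
  fixes d :: "'w \<Rightarrow> real"
  assumes fin: "finite \<Omega>" and range: "\<forall>\<omega>\<in>\<Omega>. f \<omega> \<in> {0..1}" and compat: "cap_compatible A \<Omega> D \<kappa> f"
    and dir: "admissible_direction A \<Omega> D \<kappa> f d"
  obtains t where "0 < t" "\<forall>\<omega>\<in>\<Omega>. f \<omega> + t * d \<omega> \<in> {0..1}"
    "cap_compatible A \<Omega> D \<kappa> (\<lambda>\<omega>. f \<omega> + t * d \<omega>)"
    "(\<exists>\<omega>\<in>\<Omega>. d \<omega> \<noteq> 0 \<and> f \<omega> + t * d \<omega> \<in> {0, 1})
      \<or> (\<exists>W\<subseteq>\<Omega>. sum d W \<noteq> 0 \<and> sum f W + t * sum d W = capacity A D \<kappa> W)"
proof -
  have moves: "\<exists>\<omega>\<in>\<Omega>. d \<omega> \<noteq> 0" and frac: "\<forall>\<omega>\<in>\<Omega>. d \<omega> \<noteq> 0 \<longrightarrow> \<omega> \<in> fractional_points \<Omega> f"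
    and tight: "\<forall>W\<subseteq>\<Omega>. sum f W = capacity A D \<kappa> W \<longrightarrow> sum d W = 0"
    using dir unfolding admissible_direction_def by blast+
  let ?C = "(\<lambda>\<omega>. (f \<omega>, d \<omega>, 1)) ` \<Omega> \<union> (\<lambda>\<omega>. (- f \<omega>, - d \<omega>, 0)) ` \<Omega>
    \<union> (\<lambda>W. (sum f W, sum d W, real (capacity A D \<kappa> W))) ` Pow \<Omega>"
  have slack: "sum f W < capacity A D \<kappa> W" if "W \<subseteq> \<Omega>" "sum d W \<noteq> 0" for W
    using in_slack_setsI[OF compat that(1)] tight that unfolding slack_sets_def by blast
  have "finite ?C" using fin by simp
  moreover have "\<forall>(u, v, b)\<in>?C. u \<le> b \<and> (0 < v \<longrightarrow> u < b)"
    using range frac compat slack unfolding cap_compatible_def fractional_points_def by auto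
  moreover have "\<exists>(u, v, b)\<in>?C. 0 < v"
  proof -
    obtain \<omega> where "\<omega> \<in> \<Omega>" "d \<omega> \<noteq> 0" using moves by blast
    then have "(f \<omega>, d \<omega>, 1) \<in> ?C" "(- f \<omega>, - d \<omega>, 0) \<in> ?C" "0 < d \<omega> \<or> 0 < - d \<omega>" by auto
    then show ?thesis by blast
  qed
  ultimately obtain t where t: "0 < t" "\<forall>(u, v, b)\<in>?C. u + t * v \<le> b"
    and tight_step: "\<exists>(u, v, b)\<in>?C. 0 < v \<and> u + t * v = b"
    by (rule linear_constraints_max_step)
  have "f \<omega> + t * d \<omega> \<le> 1" "- f \<omega> + t * - d \<omega> \<le> 0" if "\<omega> \<in> \<Omega>" for \<omega>
    using bspec[OF t(2), of "(f \<omega>, d \<omega>, 1)"] bspec[OF t(2), of "(- f \<omega>, - d \<omega>, 0)"] that by auto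
  then have "\<forall>\<omega>\<in>\<Omega>. f \<omega> + t * d \<omega> \<in> {0..1}" by fastforce
  moreover have "cap_compatible A \<Omega> D \<kappa> (\<lambda>\<omega>. f \<omega> + t * d \<omega>)"
    unfolding cap_compatible_def sum_perturb
    using bspec[OF t(2), of "(sum f W, sum d W, real (capacity A D \<kappa> W))" for W] by auto
  moreover from tight_step consider (upper) \<omega> where "\<omega> \<in> \<Omega>" "d \<omega> \<noteq> 0" "f \<omega> + t * d \<omega> = 1"
    | (lower) \<omega> where "\<omega> \<in> \<Omega>" "d \<omega> \<noteq> 0" "f \<omega> + t * d \<omega> = 0"
    | (set) W where "W \<subseteq> \<Omega>" "sum d W \<noteq> 0" "sum f W + t * sum d W = capacity A D \<kappa> W"
    by (auto simp: algebra_simps)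
  then have "(\<exists>\<omega>\<in>\<Omega>. d \<omega> \<noteq> 0 \<and> f \<omega> + t * d \<omega> \<in> {0, 1})
      \<or> (\<exists>W\<subseteq>\<Omega>. sum d W \<noteq> 0 \<and> sum f W + t * sum d W = capacity A D \<kappa> W)"
    by cases auto
  ultimately show thesis using that t(1) by blast
qed

lemma perturbation_step:
  fixes d :: "'w \<Rightarrow> real"
  assumes fin: "finite \<Omega>" and range: "\<forall>\<omega>\<in>\<Omega>. f \<omega> \<in> {0..1}" and compat: "cap_compatible A \<Omega> D \<kappa> f"
    and dir: "admissible_direction A \<Omega> D \<kappa> f d"
  obtains t where "0 < t" "\<forall>\<omega>\<in>\<Omega>. f \<omega> + t * d \<omega> \<in> {0..1}"
    "cap_compatible A \<Omega> D \<kappa> (\<lambda>\<omega>. f \<omega> + t * d \<omega>)"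
    "freedom A \<Omega> D \<kappa> (\<lambda>\<omega>. f \<omega> + t * d \<omega>) < freedom A \<Omega> D \<kappa> f"
proof -
  obtain t where t: "0 < t" "\<forall>\<omega>\<in>\<Omega>. f \<omega> + t * d \<omega> \<in> {0..1}"
    "cap_compatible A \<Omega> D \<kappa> (\<lambda>\<omega>. f \<omega> + t * d \<omega>)"
    and hits: "(\<exists>\<omega>\<in>\<Omega>. d \<omega> \<noteq> 0 \<and> f \<omega> + t * d \<omega> \<in> {0, 1})
      \<or> (\<exists>W\<subseteq>\<Omega>. sum d W \<noteq> 0 \<and> sum f W + t * sum d W = capacity A D \<kappa> W)"
    by (rule max_perturbation[OF fin range compat dir])
  have frac: "\<forall>\<omega>\<in>\<Omega>. d \<omega> \<noteq> 0 \<longrightarrow> \<omega> \<in> fractional_points \<Omega> f"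
    and tight: "\<forall>W\<subseteq>\<Omega>. sum f W = capacity A D \<kappa> W \<longrightarrow> sum d W = 0"
    using dir unfolding admissible_direction_def by blast+
  let ?g = "\<lambda>\<omega>. f \<omega> + t * d \<omega>"
  from hits have "fractional_points \<Omega> ?g \<noteq> fractional_points \<Omega> f
      \<or> slack_sets A \<Omega> D \<kappa> ?g \<noteq> slack_sets A \<Omega> D \<kappa> f"
  proof (elim disjE bexE exE conjE)
    fix \<omega> assume "\<omega> \<in> \<Omega>" "d \<omega> \<noteq> 0" "?g \<omega> \<in> {0, 1}"
    with frac have "\<omega> \<in> fractional_points \<Omega> f - fractional_points \<Omega> ?g"
      unfolding fractional_points_def by auto
    then show ?thesis by blast
  next
    fix W assume W: "W \<subseteq> \<Omega>" "sum d W \<noteq> 0" "sum f W + t * sum d W = capacity A D \<kappa> W"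
    with tight have "W \<in> slack_sets A \<Omega> D \<kappa> f" by (intro in_slack_setsI[OF compat]) auto
    moreover have "W \<notin> slack_sets A \<Omega> D \<kappa> ?g" using W(3) unfolding slack_sets_def sum_perturb by simp
    ultimately show ?thesis by blast
  qed
  with fin have "freedom A \<Omega> D \<kappa> ?g < freedom A \<Omega> D \<kappa> f"
    by (intro freedom_decreases fractional_points_perturb slack_sets_perturb frac compat tight)
  with t that show thesis by blast
qed

lemma realizable_by_perturbation:
  fixes d :: "'w \<Rightarrow> real"
  assumes fin: "finite \<Omega>" and range: "\<forall>\<omega>\<in>\<Omega>. f \<omega> \<in> {0..1}" and compat: "cap_compatible A \<Omega> D \<kappa> f"
    and dir: "admissible_direction A \<Omega> D \<kappa> f d"
    and nearer: "\<And>g. \<forall>\<omega>\<in>\<Omega>. g \<omega> \<in> {0..1} \<Longrightarrow> cap_compatible A \<Omega> D \<kappa> g \<Longrightarrow>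
      freedom A \<Omega> D \<kappa> g < freedom A \<Omega> D \<kappa> f \<Longrightarrow> realizable A \<Omega> D \<kappa> g"
  shows "realizable A \<Omega> D \<kappa> f"
proof -
  obtain t1 where t1: "0 < t1" "\<forall>\<omega>\<in>\<Omega>. f \<omega> + t1 * d \<omega> \<in> {0..1}"
    "cap_compatible A \<Omega> D \<kappa> (\<lambda>\<omega>. f \<omega> + t1 * d \<omega>)"
    "freedom A \<Omega> D \<kappa> (\<lambda>\<omega>. f \<omega> + t1 * d \<omega>) < freedom A \<Omega> D \<kappa> f"
    by (rule perturbation_step[OF fin range compat dir])
  obtain t2 where t2: "0 < t2" "\<forall>\<omega>\<in>\<Omega>. f \<omega> + t2 * - d \<omega> \<in> {0..1}"
    "cap_compatible A \<Omega> D \<kappa> (\<lambda>\<omega>. f \<omega> + t2 * - d \<omega>)"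
    "freedom A \<Omega> D \<kappa> (\<lambda>\<omega>. f \<omega> + t2 * - d \<omega>) < freedom A \<Omega> D \<kappa> f"
    by (rule perturbation_step[OF fin range compat admissible_direction_uminus[OF dir]])
  let ?l = "t2 / (t1 + t2)"
  have "0 \<le> ?l" "?l \<le> 1" using t1(1) t2(1) by auto
  have "(\<lambda>\<omega>. ?l * (f \<omega> + t1 * d \<omega>) + (1 - ?l) * (f \<omega> + t2 * - d \<omega>)) = f"
  proof
    fix \<omega>
    show "?l * (f \<omega> + t1 * d \<omega>) + (1 - ?l) * (f \<omega> + t2 * - d \<omega>) = f \<omega>"
      using t1(1) t2(1) by (simp add: divide_simps) algebra
  qed
  with realizable_convex[OF nearer[OF t1(2-4)] nearer[OF t2(2-4)] \<open>0 \<le> ?l\<close> \<open>?l \<le> 1\<close>]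
  show ?thesis by simp
qed

text \<open>If \<open>\<Omega>\<close> itself is tight the direction has to keep \<open>sum f \<Omega>\<close> fixed; integrality of the
  capacity then provides a second fractional point.\<close>
lemma perturbation_direction:
  assumes fin: "finite \<Omega>" and range: "\<forall>\<omega>\<in>\<Omega>. f \<omega> \<in> {0..1}" and \<omega>0: "\<omega>0 \<in> fractional_points \<Omega> f"
    and trivial_tight: "\<forall>W\<subseteq>\<Omega>. sum f W = capacity A D \<kappa> W \<longrightarrow> W = {} \<or> W = \<Omega>"
  obtains d where "admissible_direction A \<Omega> D \<kappa> f d"
proof (cases "sum f \<Omega> = capacity A D \<kappa> \<Omega>")
  case False
  let ?d = "\<lambda>\<omega>. if \<omega> = \<omega>0 then 1 else 0 :: real"
  have "admissible_direction A \<Omega> D \<kappa> f ?d"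
    unfolding admissible_direction_def
  proof (intro conjI)
    show "\<exists>\<omega>\<in>\<Omega>. ?d \<omega> \<noteq> 0" "\<forall>\<omega>\<in>\<Omega>. ?d \<omega> \<noteq> 0 \<longrightarrow> \<omega> \<in> fractional_points \<Omega> f"
      using \<omega>0 unfolding fractional_points_def by auto
    show "\<forall>W\<subseteq>\<Omega>. sum f W = capacity A D \<kappa> W \<longrightarrow> sum ?d W = 0"
      using trivial_tight False by auto
  qed
  then show thesis by (rule that)
next
  case True
  then obtain \<omega>1 where \<omega>1: "\<omega>1 \<in> fractional_points \<Omega> f" "\<omega>1 \<noteq> \<omega>0"
    using fractional_points_not_singleton[OF fin range _ \<omega>0] by blast
  let ?d = "\<lambda>\<omega>. (if \<omega> = \<omega>0 then 1 else 0) - (if \<omega> = \<omega>1 then 1 else 0) :: real"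
  have "sum ?d \<Omega> = 0"
    using \<omega>0 \<omega>1 fin unfolding fractional_points_def by (simp add: sum_subtractf)
  have "admissible_direction A \<Omega> D \<kappa> f ?d"
    unfolding admissible_direction_def
  proof (intro conjI)
    show "\<exists>\<omega>\<in>\<Omega>. ?d \<omega> \<noteq> 0" "\<forall>\<omega>\<in>\<Omega>. ?d \<omega> \<noteq> 0 \<longrightarrow> \<omega> \<in> fractional_points \<Omega> f"
      using \<omega>0 \<omega>1 unfolding fractional_points_def by auto
    show "\<forall>W\<subseteq>\<Omega>. sum f W = capacity A D \<kappa> W \<longrightarrow> sum ?d W = 0"
      using trivial_tight \<open>sum ?d \<Omega> = 0\<close> by auto
  qed
  then show thesis by (rule that)
qed

section \<open>Compatible outcomes are realizable\<close>

lemma reduction_cases: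
  fixes f :: "'w \<Rightarrow> real"
  assumes range: "\<forall>\<omega>\<in>\<Omega>. f \<omega> \<in> {0..1}"
  obtains (empty) "\<Omega> = {}"
    | (zero) \<omega> where "\<omega> \<in> \<Omega>" "f \<omega> = 0"
    | (tight) W where "W \<subseteq> \<Omega>" "W \<noteq> {}" "W \<noteq> \<Omega>" "sum f W = capacity A D \<kappa> W"
    | (ones) \<omega> where "\<omega> \<in> \<Omega>" "\<forall>\<omega>\<in>\<Omega>. f \<omega> = 1"
        "\<forall>W\<subseteq>\<Omega>. sum f W = capacity A D \<kappa> W \<longrightarrow> W = {} \<or> W = \<Omega>"
    | (fractional) \<omega>0 where "\<omega>0 \<in> fractional_points \<Omega> f"
        "\<forall>W\<subseteq>\<Omega>. sum f W = capacity A D \<kappa> W \<longrightarrow> W = {} \<or> W = \<Omega>"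
proof (cases "\<exists>W. W \<subseteq> \<Omega> \<and> W \<noteq> {} \<and> W \<noteq> \<Omega> \<and> sum f W = capacity A D \<kappa> W")
  case True
  then show ?thesis using that(3) by blast
next
  case False
  then have trivial: "\<forall>W\<subseteq>\<Omega>. sum f W = capacity A D \<kappa> W \<longrightarrow> W = {} \<or> W = \<Omega>" by blast
  show ?thesis
  proof (cases "\<forall>\<omega>\<in>\<Omega>. f \<omega> = 1")
    case True
    then show ?thesis using that(1,4) trivial by blast
  next
    case False
    then obtain \<omega> where "\<omega> \<in> \<Omega>" "f \<omega> \<noteq> 1" by blast
    moreover have "\<omega> \<in> fractional_points \<Omega> f" if "f \<omega> \<noteq> 0"
      using range that calculation unfolding fractional_points_def by auto
    ultimately show ?thesis using that(2,5) trivial by blast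
  qed
qed

lemma realizable_step:
  assumes finA: "finite A" and fin: "finite \<Omega>" and range: "\<forall>\<omega>\<in>\<Omega>. f \<omega> \<in> {0..1}"
    and compat: "cap_compatible A \<Omega> D \<kappa> f"
    and smaller: "\<And>\<Omega>' D' \<kappa>'. \<Omega>' \<subset> \<Omega> \<Longrightarrow> cap_compatible A \<Omega>' D' \<kappa>' f \<Longrightarrow> realizable A \<Omega>' D' \<kappa>' f"
    and nearer: "\<And>g. \<forall>\<omega>\<in>\<Omega>. g \<omega> \<in> {0..1} \<Longrightarrow> cap_compatible A \<Omega> D \<kappa> g \<Longrightarrow>
      freedom A \<Omega> D \<kappa> g < freedom A \<Omega> D \<kappa> f \<Longrightarrow> realizable A \<Omega> D \<kappa> g"
  shows "realizable A \<Omega> D \<kappa> f"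
  using range
proof (cases rule: reduction_cases[where A = A and D = D and \<kappa> = \<kappa>])
  case empty
  then show ?thesis by (intro realizable_zero) simp
next
  case (zero \<omega>)
  have "realizable A (\<Omega> - {\<omega>}) (\<lambda>a. D a \<inter> (\<Omega> - {\<omega>})) \<kappa> f"
    using zero(1) by (intro smaller cap_compatible_restrict[OF compat]) auto
  moreover have "realizable A (\<Omega> - (\<Omega> - {\<omega>})) (\<lambda>a. if D a \<inter> (\<Omega> - {\<omega>}) = {} then D a else {}) \<kappa> f"
    using zero by (intro realizable_zero) auto
  ultimately show ?thesis by (rule realizable_split)
next
  case (tight W)
  have "realizable A W (\<lambda>a. D a \<inter> W) \<kappa> f"
    using tight by (intro smaller cap_compatible_restrict[OF compat]) auto
  moreover have "realizable A (\<Omega> - W) (\<lambda>a. if D a \<inter> W = {} then D a else {}) \<kappa> f"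
    using tight by (intro smaller cap_compatible_outside_tight[OF fin compat]) auto
  ultimately show ?thesis by (rule realizable_split)
next
  case (ones \<omega>)
  obtain a0 where a0: "a0 \<in> A" "\<omega> \<in> D a0" "1 \<le> \<kappa> a0"
    using ones by (metis cap_compatible_obtain_agent[OF compat])
  have "realizable A (\<Omega> - {\<omega>}) (\<lambda>a. D a - {\<omega>}) (\<kappa>(a0 := \<kappa> a0 - 1)) f"
    using cap_compatible_assign[OF finA a0(1) ones(1,2) compat ones(3)] ones(1) by (intro smaller) blast+
  then show ?thesis using ones(1,2) by (intro realizable_assign[where \<kappa> = \<kappa> and D = D, OF a0]) blast+
next
  case (fractional \<omega>0)
  obtain d where "admissible_direction A \<Omega> D \<kappa> f d"
    by (rule perturbation_direction[OF fin range fractional])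
  then show ?thesis by (rule realizable_by_perturbation[OF fin range compat _ nearer])
qed

lemma realizable_if_cap_compatible:
  assumes "finite A" "finite \<Omega>" "\<forall>\<omega>\<in>\<Omega>. f \<omega> \<in> {0..1}" "cap_compatible A \<Omega> D \<kappa> f"
  shows "realizable A \<Omega> D \<kappa> f"
  using assms(2-4)
proof (induction \<Omega> arbitrary: D \<kappa> f rule: finite_psubset_induct)
  case (psubset \<Omega>)
  from psubset.prems show ?case
  proof (induction f rule: measure_induct_rule[where f = "freedom A \<Omega> D \<kappa>"])
    case (less f)
    show ?case
    proof (rule realizable_step[OF assms(1) psubset.hyps(1) less.prems])
      show "realizable A \<Omega>' D' \<kappa>' f" if "\<Omega>' \<subset> \<Omega>" "cap_compatible A \<Omega>' D' \<kappa>' f" for \<Omega>' D' \<kappa>'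
        by (rule psubset.IH[OF that(1) _ that(2)]) (use that(1) less.prems(1) in blast)
    qed (rule less.IH)
  qed
qed

section \<open>The search game\<close>

lemma cell_eq:
  assumes "partition_on \<Omega> (P i)" "c \<in> P i" "\<omega> \<in> c"
  shows "cell P i \<omega> = c"
  unfolding cell_def
proof (rule the_equality)
  fix c' assume "c' \<in> P i \<and> \<omega> \<in> c'"
  then show "c' = c"
    using assms partition_onD2[OF assms(1)] by (meson disjointD disjoint_iff)
qed (use assms in blast)

lemma cell_in_partition:
  assumes "partition_on \<Omega> (P i)" "\<omega> \<in> \<Omega>"
  shows "cell P i \<omega> \<in> P i" "\<omega> \<in> cell P i \<omega>"
proof -
  obtain c where "c \<in> P i" "\<omega> \<in> c" using assms partition_onD1[OF assms(1)] by blast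
  then show "cell P i \<omega> \<in> P i" "\<omega> \<in> cell P i \<omega>" using cell_eq[of \<Omega> P i c \<omega>] assms(1) by simp_all
qed

lemma searchers_pos_iff:
  assumes "finite N"
  shows "1 \<le> searchers N P s \<omega> \<longleftrightarrow> (\<exists>i\<in>N. \<omega> \<in> s i (cell P i \<omega>))"
  unfolding searchers_def using assms by (simp add: sum.If_cases Int_def Suc_le_eq card_gt_0_iff Bex_def)

lemma capacity_Sigma:
  assumes "finite N" "\<forall>i\<in>N. finite (P i)"
  shows "capacity (Sigma N P) snd (\<lambda>(i, c). K i) W = (\<Sum>i\<in>N. K i * card {c\<in>P i. c \<inter> W \<noteq> {}})"
proof -
  have "capacity (Sigma N P) snd (\<lambda>(i, c). K i) W = (\<Sum>i\<in>N. \<Sum>c\<in>P i. if c \<inter> W = {} then 0 else K i)"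
    unfolding capacity_def using assms by (simp add: sum.Sigma case_prod_beta cong: if_cong)
  also have "\<dots> = (\<Sum>i\<in>N. K i * card {c\<in>P i. c \<inter> W \<noteq> {}})"
    using assms by (intro sum.cong) (simp_all add: sum.If_cases Int_def)
  finally show ?thesis .
qed

lemma compatible_iff_cap_compatible:
  assumes "finite N" "\<forall>i\<in>N. finite (P i)"
  shows "compatible N \<Omega> P K f \<longleftrightarrow> cap_compatible (Sigma N P) \<Omega> snd (\<lambda>(i, c). K i) f"
  unfolding compatible_def cap_compatible_def capacity_Sigma[OF assms] by simp

definition selection_profile :: "'i set \<Rightarrow> ('i \<Rightarrow> 'w set set) \<Rightarrow> ('i \<times> 'w set \<Rightarrow> 'w set) \<Rightarrow> 'i \<Rightarrow> 'w set \<Rightarrow> 'w set" where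
  "selection_profile N P x i c = (if i \<in> N \<and> c \<in> P i then x (i, c) else {})"

lemma pure_profile_selection_profile:
  assumes "selection (Sigma N P) snd (\<lambda>(i, c). K i) x"
  shows "pure_profile N P K (selection_profile N P x)"
  using assms unfolding pure_profile_def pure_strategy_def selection_profile_def selection_def by auto

lemma searched_by_selection_profile:
  assumes "\<And>i. i \<in> N \<Longrightarrow> partition_on \<Omega> (P i)" "selection (Sigma N P) snd (\<lambda>(i, c). K i) x"
  shows "(\<exists>i\<in>N. \<omega> \<in> selection_profile N P x i (cell P i \<omega>)) \<longleftrightarrow> (\<exists>a\<in>Sigma N P. \<omega> \<in> x a)"
proof
  assume "\<exists>i\<in>N. \<omega> \<in> selection_profile N P x i (cell P i \<omega>)"
  then show "\<exists>a\<in>Sigma N P. \<omega> \<in> x a"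
    unfolding selection_profile_def by (auto split: if_splits)
next
  assume "\<exists>a\<in>Sigma N P. \<omega> \<in> x a"
  then obtain i c where ic: "i \<in> N" "c \<in> P i" "\<omega> \<in> x (i, c)" by auto
  moreover have "\<omega> \<in> c" using assms(2) ic unfolding selection_def by auto
  then have "cell P i \<omega> = c" using cell_eq[of \<Omega> P i c \<omega>] assms(1) ic by blast
  ultimately show "\<exists>i\<in>N. \<omega> \<in> selection_profile N P x i (cell P i \<omega>)"
    unfolding selection_profile_def by auto
qed

lemma lottery_if_realizable:
  assumes "finite N" "\<And>i. i \<in> N \<Longrightarrow> partition_on \<Omega> (P i)"
    and "realizable (Sigma N P) \<Omega> snd (\<lambda>(i, c). K i) f"
  shows "induced_by_lottery N \<Omega> P K f"
proof -
  obtain \<tau> where sel: "\<forall>x\<in>set_pmf \<tau>. selection (Sigma N P) snd (\<lambda>(i, c). K i) x"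
    and marg: "\<forall>\<omega>\<in>\<Omega>. f \<omega> = measure_pmf.prob \<tau> {x. \<exists>a\<in>Sigma N P. \<omega> \<in> x a}"
    using assms(3) unfolding realizable_def by blast
  have "measure_pmf.prob \<tau> {x. \<exists>a\<in>Sigma N P. \<omega> \<in> x a}
      = measure_pmf.prob (map_pmf (selection_profile N P) \<tau>) {s. 1 \<le> searchers N P s \<omega>}" for \<omega>
  proof -
    have "measure_pmf.prob \<tau> {x. \<exists>a\<in>Sigma N P. \<omega> \<in> x a}
        = measure_pmf.prob \<tau> (selection_profile N P -` {s. 1 \<le> searchers N P s \<omega>})"
    proof (rule measure_pmf_cong_support)
      fix x assume "x \<in> set_pmf \<tau>"
      with sel have "selection (Sigma N P) snd (\<lambda>(i, c). K i) x" by blast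
      from searched_by_selection_profile[OF assms(2) this]
      show "x \<in> {x. \<exists>a\<in>Sigma N P. \<omega> \<in> x a} \<longleftrightarrow> x \<in> selection_profile N P -` {s. 1 \<le> searchers N P s \<omega>}"
        unfolding vimage_eq mem_Collect_eq searchers_pos_iff[OF assms(1)] by blast
    qed
    then show ?thesis by simp
  qed
  moreover have "set_pmf (map_pmf (selection_profile N P) \<tau>) \<subseteq> {s. pure_profile N P K s}"
    using sel by (auto intro!: pure_profile_selection_profile)
  ultimately show ?thesis
    unfolding induced_by_lottery_def using marg by (intro exI[of _ "map_pmf (selection_profile N P) \<tau>"]) auto
qed

text \<open>If nobody searches \<open>\<omega>\<close>, division by zero makes every credit for \<open>\<omega>\<close> vanish.\<close>
definition credit :: "'i set \<Rightarrow> ('i \<Rightarrow> 'w set set) \<Rightarrow> ('i \<Rightarrow> 'w set \<Rightarrow> 'w set) \<Rightarrow> 'i \<Rightarrow> 'w set \<Rightarrow> 'w \<Rightarrow> real" where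
  "credit N P s i c \<omega> = of_bool (\<omega> \<in> s i c) / real (searchers N P s \<omega>)"

lemma credit_bounds: "0 \<le> credit N P s i c \<omega>" "credit N P s i c \<omega> \<le> of_bool (\<omega> \<in> s i c)"
  unfolding credit_def by (auto simp: divide_le_eq)

lemma sum_credit:
  "(\<Sum>i\<in>N. credit N P s i (cell P i \<omega>) \<omega>) = of_bool (1 \<le> searchers N P s \<omega>)"
proof -
  have "real (searchers N P s \<omega>) = (\<Sum>i\<in>N. of_bool (\<omega> \<in> s i (cell P i \<omega>)))"
    unfolding searchers_def of_nat_sum by (intro sum.cong) auto
  then show ?thesis
    unfolding credit_def sum_divide_distrib[symmetric] by (simp add: Suc_le_eq)
qed

lemma integrable_credit: "integrable (measure_pmf \<sigma>) (\<lambda>s. credit N P s i c \<omega>)"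
proof (rule measure_pmf.integrable_const_bound[where B = 1])
  have "\<bar>credit N P s i c \<omega>\<bar> \<le> 1" for s
    using credit_bounds[of N P s i c \<omega>] by (cases "\<omega> \<in> s i c") auto
  then show "AE s in measure_pmf \<sigma>. norm (credit N P s i c \<omega>) \<le> 1" by simp
qed simp

lemma expected_credit_le_capacity:
  assumes "finite c" "\<forall>s\<in>set_pmf \<sigma>. s i c \<subseteq> c \<and> card (s i c) \<le> k"
  shows "(\<Sum>\<omega>\<in>c. measure_pmf.expectation \<sigma> (\<lambda>s. credit N P s i c \<omega>)) \<le> k"
proof -
  have "(\<Sum>\<omega>\<in>c. measure_pmf.expectation \<sigma> (\<lambda>s. credit N P s i c \<omega>))
      = measure_pmf.expectation \<sigma> (\<lambda>s. \<Sum>\<omega>\<in>c. credit N P s i c \<omega>)"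
    by (rule Bochner_Integration.integral_sum[symmetric]) (rule integrable_credit)
  also have "\<dots> \<le> k"
  proof (rule measure_pmf.integral_le_const)
    show "AE s in measure_pmf \<sigma>. (\<Sum>\<omega>\<in>c. credit N P s i c \<omega>) \<le> k"
    proof (rule AE_pmfI)
      fix s assume "s \<in> set_pmf \<sigma>"
      then have "s i c \<subseteq> c" "card (s i c) \<le> k" using assms(2) by auto
      have "(\<Sum>\<omega>\<in>c. credit N P s i c \<omega>) \<le> (\<Sum>\<omega>\<in>c. of_bool (\<omega> \<in> s i c))"
        by (intro sum_mono credit_bounds)
      also have "\<dots> = card (s i c)"
        using assms(1) \<open>s i c \<subseteq> c\<close> by (simp add: Int_absorb1 Int_def[symmetric])
      finally show "(\<Sum>\<omega>\<in>c. credit N P s i c \<omega>) \<le> k" using \<open>card (s i c) \<le> k\<close> by simp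
    qed
  qed (simp add: integrable_credit)
  finally show ?thesis .
qed

lemma fractional_allocation_if_lottery:
  assumes fin: "finite \<Omega>" and part: "\<And>i. i \<in> N \<Longrightarrow> partition_on \<Omega> (P i)"
    and "induced_by_lottery N \<Omega> P K f"
  shows "\<exists>\<alpha>. fractional_allocation N P K \<alpha> \<and> (\<forall>\<omega>\<in>\<Omega>. f \<omega> = generated_outcome N P \<alpha> \<omega>)"
proof -
  obtain \<sigma> where pure: "set_pmf \<sigma> \<subseteq> {s. pure_profile N P K s}"
    and marg: "\<forall>\<omega>\<in>\<Omega>. f \<omega> = measure_pmf.prob \<sigma> {s. searchers N P s \<omega> \<ge> 1}"
    using assms(3) unfolding induced_by_lottery_def by blast
  define \<alpha> where "\<alpha> i c \<omega> = measure_pmf.expectation \<sigma> (\<lambda>s. credit N P s i c \<omega>)" for i c \<omega>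
  have "fractional_allocation N P K \<alpha>"
    unfolding fractional_allocation_def
  proof (intro ballI conjI)
    fix i c \<omega> show "0 \<le> \<alpha> i c \<omega>" unfolding \<alpha>_def by (simp add: credit_bounds)
  next
    fix i c assume "i \<in> N" "c \<in> P i"
    then have "c \<subseteq> \<Omega>" using partition_onD1[OF part] by blast
    then have "finite c" using fin by (rule finite_subset)
    moreover have "\<forall>s\<in>set_pmf \<sigma>. s i c \<subseteq> c \<and> card (s i c) \<le> K i"
      using pure \<open>i \<in> N\<close> \<open>c \<in> P i\<close> unfolding pure_profile_def pure_strategy_def by auto
    ultimately show "(\<Sum>\<omega>\<in>c. \<alpha> i c \<omega>) \<le> K i"
      unfolding \<alpha>_def by (rule expected_credit_le_capacity)
  qed
  moreover have "f \<omega> = generated_outcome N P \<alpha> \<omega>" if "\<omega> \<in> \<Omega>" for \<omega>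
  proof -
    have "(\<Sum>i\<in>N. \<alpha> i (cell P i \<omega>) \<omega>)
        = measure_pmf.expectation \<sigma> (\<lambda>s. \<Sum>i\<in>N. credit N P s i (cell P i \<omega>) \<omega>)"
      unfolding \<alpha>_def by (rule Bochner_Integration.integral_sum[symmetric]) (rule integrable_credit)
    also have "\<dots> = measure_pmf.expectation \<sigma> (indicator {s. searchers N P s \<omega> \<ge> 1})"
      by (simp only: sum_credit indicator_def[abs_def] mem_Collect_eq)
    also have "\<dots> = measure_pmf.prob \<sigma> {s. searchers N P s \<omega> \<ge> 1}"
      by simp
    finally show ?thesis
      using marg that unfolding generated_outcome_def by simp
  qed
  ultimately show ?thesis by blast
qed

lemma sum_allocation_le_cells:
  fixes \<beta> :: "'w set \<Rightarrow> 'w \<Rightarrow> real"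
  assumes part: "partition_on \<Omega> (P i)" and fin: "finite \<Omega>" and W: "W \<subseteq> \<Omega>"
    and alloc: "\<forall>c\<in>P i. (\<forall>\<omega>\<in>c. 0 \<le> \<beta> c \<omega>) \<and> sum (\<beta> c) c \<le> k"
  shows "(\<Sum>\<omega>\<in>W. \<beta> (cell P i \<omega>) \<omega>) \<le> k * real (card {c\<in>P i. c \<inter> W \<noteq> {}})"
proof -
  let ?C = "{c\<in>P i. c \<inter> W \<noteq> {}}"
  have cell: "cell P i \<omega> \<in> ?C \<and> \<omega> \<in> cell P i \<omega>" if "\<omega> \<in> W" for \<omega>
    using cell_in_partition[of \<Omega> P i, OF part] that W by blast
  have "finite ?C" using finite_elements[OF fin part] by simp
  have "(\<Sum>\<omega>\<in>W. \<beta> (cell P i \<omega>) \<omega>) = (\<Sum>c\<in>?C. \<Sum>\<omega>\<in>{\<omega>\<in>W. cell P i \<omega> = c}. \<beta> (cell P i \<omega>) \<omega>)"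
    using fin W \<open>finite ?C\<close> cell by (intro sum.group[symmetric]) (auto intro: finite_subset)
  also have "\<dots> = (\<Sum>c\<in>?C. \<Sum>\<omega>\<in>c \<inter> W. \<beta> c \<omega>)"
    using cell cell_eq[of \<Omega> P i, OF part] by (intro sum.cong) auto
  also have "\<dots> \<le> (\<Sum>c\<in>?C. k)"
  proof (rule sum_mono)
    fix c assume "c \<in> ?C"
    then have "c \<subseteq> \<Omega>" using partition_onD1[OF part] by blast
    then have "finite c" using fin by (rule finite_subset)
    then have "(\<Sum>\<omega>\<in>c \<inter> W. \<beta> c \<omega>) \<le> sum (\<beta> c) c"
      using alloc \<open>c \<in> ?C\<close> by (intro sum_mono2) auto
    also have "\<dots> \<le> k" using alloc \<open>c \<in> ?C\<close> by blast
    finally show "(\<Sum>\<omega>\<in>c \<inter> W. \<beta> c \<omega>) \<le> k" .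
  qed
  finally show ?thesis by (simp add: mult.commute)
qed

lemma compatible_if_fractional_allocation:
  assumes fin: "finite \<Omega>" and part: "\<And>i. i \<in> N \<Longrightarrow> partition_on \<Omega> (P i)"
    and alloc: "fractional_allocation N P K \<alpha>" and gen: "\<forall>\<omega>\<in>\<Omega>. f \<omega> = generated_outcome N P \<alpha> \<omega>"
  shows "compatible N \<Omega> P K f"
  unfolding compatible_def
proof (intro allI impI)
  fix W assume W: "W \<subseteq> \<Omega>"
  have "(\<Sum>\<omega>\<in>W. f \<omega>) \<le> (\<Sum>\<omega>\<in>W. \<Sum>i\<in>N. \<alpha> i (cell P i \<omega>) \<omega>)"
    using gen W unfolding generated_outcome_def by (intro sum_mono) auto
  also have "\<dots> = (\<Sum>i\<in>N. \<Sum>\<omega>\<in>W. \<alpha> i (cell P i \<omega>) \<omega>)" by (rule sum.swap)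
  also have "\<dots> \<le> (\<Sum>i\<in>N. real (K i) * real (card {c\<in>P i. c \<inter> W \<noteq> {}}))"
  proof (rule sum_mono)
    fix i assume "i \<in> N"
    with alloc have "\<forall>c\<in>P i. (\<forall>\<omega>\<in>c. 0 \<le> \<alpha> i c \<omega>) \<and> sum (\<alpha> i c) c \<le> K i"
      unfolding fractional_allocation_def by blast
    from sum_allocation_le_cells[where P = P and i = i, OF part[OF \<open>i \<in> N\<close>] fin W this]
    show "(\<Sum>\<omega>\<in>W. \<alpha> i (cell P i \<omega>) \<omega>) \<le> real (K i) * real (card {c\<in>P i. c \<inter> W \<noteq> {}})" .
  qed
  finally show "(\<Sum>\<omega>\<in>W. f \<omega>) \<le> (\<Sum>i\<in>N. real (K i) * real (card {c\<in>P i. c \<inter> W \<noteq> {}}))" .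
qed

theorem proposition2:
  fixes N :: "'i set" and \<Omega> :: "'w set" and P :: "'i \<Rightarrow> 'w set set" and K :: "'i \<Rightarrow> nat"
    and f :: "'w \<Rightarrow> real"
  assumes "finite N" and "finite \<Omega>"
    and "\<And>i. i \<in> N \<Longrightarrow> partition_on \<Omega> (P i)"
    and "\<And>\<omega>. \<omega> \<in> \<Omega> \<Longrightarrow> 0 \<le> f \<omega> \<and> f \<omega> \<le> 1"
  shows "(induced_by_lottery N \<Omega> P K f \<longleftrightarrow> compatible N \<Omega> P K f)
       \<and> (compatible N \<Omega> P K f \<longleftrightarrow>
            (\<exists>\<alpha>. fractional_allocation N P K \<alpha> \<and> (\<forall>\<omega>\<in>\<Omega>. f \<omega> = generated_outcome N P \<alpha> \<omega>)))"
proof -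
  have cells: "\<forall>i\<in>N. finite (P i)" using assms(2,3) finite_elements by blast
  have "realizable (Sigma N P) \<Omega> snd (\<lambda>(i, c). K i) f" if "compatible N \<Omega> P K f"
    using that assms cells
    by (intro realizable_if_cap_compatible) (auto simp: compatible_iff_cap_compatible)
  then have "compatible N \<Omega> P K f \<Longrightarrow> induced_by_lottery N \<Omega> P K f"
    using lottery_if_realizable[where P = P, OF assms(1,3)] by blast
  moreover have "induced_by_lottery N \<Omega> P K f
      \<Longrightarrow> \<exists>\<alpha>. fractional_allocation N P K \<alpha> \<and> (\<forall>\<omega>\<in>\<Omega>. f \<omega> = generated_outcome N P \<alpha> \<omega>)"
    by (rule fractional_allocation_if_lottery[where P = P, OF assms(2,3)])
  moreover have "fractional_allocation N P K \<alpha> \<Longrightarrow> \<forall>\<omega>\<in>\<Omega>. f \<omega> = generated_outcome N P \<alpha> \<omega>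
      \<Longrightarrow> compatible N \<Omega> P K f" for \<alpha>
    by (rule compatible_if_fractional_allocation[where P = P, OF assms(2,3)])
  ultimately show ?thesis by blast
qed

end
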